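(* Let $\mathcal{H}$ be a complex separable Hilbert space and let $T = MN - NM$ where $M, N \in \mathcal{B}(\mathcal{H})$ satisfy $M^2 = 0 = N^2$. Then (a) every connected component of $\sigma(T)$ intersects $\sigma(-T)$; (b) every connected component of $\sigma_e(T)$ intersects $\sigma_e(-T)$.
   Context: $\sigma_e(T)$ denotes the essential spectrum of $T$, i.e. the spectrum of the image of $T$ in the Calkin algebra $\mathcal{B}(\mathcal{H})/\mathcal{K}(\mathcal{H})$. *)

theory Defs
  imports "HOL-Analysis.Analysis"
begin

text \<open>HOL-Analysis only provides real inner product spaces. A complex Hilbert space is
 a Banach space (complete normed space, whose real scalar multiplication is the restriction
 of the complex one) with a complex scalar multiplication and a complex inner product
 (conjugate-linear in the first argument) inducing the norm.\<close>

class complex_hilbert_space = banach +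
  fixes scaleC :: "complex \<Rightarrow> 'a \<Rightarrow> 'a" (infixr "*\<^sub>C" 75)
    and cinner :: "'a \<Rightarrow> 'a \<Rightarrow> complex"
  assumes scaleC_add_right: "a *\<^sub>C (x + y) = a *\<^sub>C x + a *\<^sub>C y"
    and scaleC_add_left: "(a + b) *\<^sub>C x = a *\<^sub>C x + b *\<^sub>C x"
    and scaleC_scaleC: "a *\<^sub>C (b *\<^sub>C x) = (a * b) *\<^sub>C x"
    and scaleC_one: "1 *\<^sub>C x = x"
    and scaleR_scaleC: "r *\<^sub>R x = complex_of_real r *\<^sub>C x"
    and cinner_commute: "cinner x y = cnj (cinner y x)"
    and cinner_add_left: "cinner (x + y) z = cinner x z + cinner y z"
    and cinner_scaleC_left: "cinner (a *\<^sub>C x) y = cnj a * cinner x y"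
    and norm_cinner: "norm x = sqrt (Re (cinner x x))"

definition separable_space :: "'a::topological_space itself \<Rightarrow> bool" where
  "separable_space _ \<longleftrightarrow> (\<exists>D::'a set. countable D \<and> closure D = UNIV)"

definition bounded_clinear :: "('a::complex_hilbert_space \<Rightarrow> 'a) \<Rightarrow> bool" where
  "bounded_clinear T \<longleftrightarrow> bounded_linear T \<and> (\<forall>c x. T (c *\<^sub>C x) = c *\<^sub>C T x)"

definition compact_op :: "('a::complex_hilbert_space \<Rightarrow> 'a) \<Rightarrow> bool" where
  "compact_op K \<longleftrightarrow> bounded_clinear K \<and> compact (closure (K ` ball 0 1))"

definition op_spectrum :: "('a::complex_hilbert_space \<Rightarrow> 'a) \<Rightarrow> complex set" where
  "op_spectrum T = {l. \<not> (\<exists>S. bounded_clinear S \<and>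
      (\<forall>x. S (T x - l *\<^sub>C x) = x) \<and> (\<forall>x. T (S x) - l *\<^sub>C S x = x))}"

text \<open>Essential spectrum: spectrum of the image of T in the Calkin algebra B(H)/K(H).
  The class of T - \<lambda> is invertible in B(H)/K(H) iff there is S in B(H) with
  S(T - \<lambda>) - I and (T - \<lambda>)S - I compact (every element of the quotient lifts to B(H)).\<close>
definition ess_spectrum :: "('a::complex_hilbert_space \<Rightarrow> 'a) \<Rightarrow> complex set" where
  "ess_spectrum T = {l. \<not> (\<exists>S. bounded_clinear S \<and>
      compact_op (\<lambda>x. S (T x - l *\<^sub>C x) - x) \<and>
      compact_op (\<lambda>x. T (S x) - l *\<^sub>C S x - x))}"

end

theory Submission
  imports Defs
begin

text \<open>For \<open>T = MN - NM\<close> with \<open>M\<^sup>2 = N\<^sup>2 = 0\<close> and a scalar \<open>z \<noteq> 0\<close> one has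
  \<open>(z + MN)(z - NM) = (z - NM)(z + MN) = z(z + T)\<close>, so invertibility of \<open>z + T\<close> forces that of
  \<open>z + MN\<close> and \<open>z - NM\<close>. By Jacobson's lemma (\<open>z + ab\<close> is invertible iff \<open>z + ba\<close> is) the
  factors \<open>z + NM\<close> and \<open>z - MN\<close> are invertible too, and their product is \<open>z(z - T)\<close>.\<close>

section \<open>Invertibility modulo a two-sided ideal\<close>

definition two_sided_ideal :: "'r::{ring,monoid_mult} set \<Rightarrow> bool" where
  "two_sided_ideal J \<longleftrightarrow>
    0 \<in> J \<and> (\<forall>x\<in>J. \<forall>y\<in>J. x + y \<in> J) \<and> (\<forall>a. \<forall>x\<in>J. a * x \<in> J \<and> x * a \<in> J)"

definition invertible_mod :: "'r::{ring,monoid_mult} set \<Rightarrow> 'r \<Rightarrow> bool" where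
  "invertible_mod J X \<longleftrightarrow> (\<exists>S. S * X - 1 \<in> J \<and> X * S - 1 \<in> J)"

lemma two_sided_ideal_zero: "two_sided_ideal {0}"
  unfolding two_sided_ideal_def by simp

lemma invertible_mod_uminus: "invertible_mod J X \<Longrightarrow> invertible_mod J (- X)"
  unfolding invertible_mod_def by (metis minus_mult_minus)

context
  fixes J :: "'r::{ring,monoid_mult} set"
  assumes J: "two_sided_ideal J"
begin

lemma ideal_zero: "0 \<in> J"
  using J unfolding two_sided_ideal_def by blast

lemma ideal_add: "x \<in> J \<Longrightarrow> y \<in> J \<Longrightarrow> x + y \<in> J"
  using J unfolding two_sided_ideal_def by blast

lemma ideal_mult_left: "x \<in> J \<Longrightarrow> a * x \<in> J"
  using J unfolding two_sided_ideal_def by blast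

lemma ideal_mult_right: "x \<in> J \<Longrightarrow> x * a \<in> J"
  using J unfolding two_sided_ideal_def by blast

lemma ideal_uminus: "x \<in> J \<Longrightarrow> - x \<in> J"
  using ideal_mult_left[of x "- 1"] by simp

lemma ideal_diff: "x \<in> J \<Longrightarrow> y \<in> J \<Longrightarrow> x - y \<in> J"
  using ideal_add[of x "- y"] ideal_uminus[of y] by simp

lemma invertible_modI:
  assumes L: "L * X - 1 \<in> J" and R: "X * R - 1 \<in> J"
  shows "invertible_mod J X"
proof -
  have "R * X - 1 = (L * X - 1) - (L * X - 1) * (R * X) + L * (X * R - 1) * X"
    by (simp add: algebra_simps)
  also have "\<dots> \<in> J"
    using ideal_add[OF ideal_diff[OF L ideal_mult_right[OF L]]
        ideal_mult_right[OF ideal_mult_left[OF R]]] .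
  finally show ?thesis
    unfolding invertible_mod_def using R by blast
qed

lemma invertible_mod_unit:
  assumes "U * V = 1" and "V * U = 1"
  shows "invertible_mod J U"
  unfolding invertible_mod_def using assms ideal_zero by (intro exI[of _ V]) simp

lemma invertible_mod_mult:
  assumes "invertible_mod J P" and "invertible_mod J Q"
  shows "invertible_mod J (P * Q)"
proof -
  obtain S T where S: "S * P - 1 \<in> J" "P * S - 1 \<in> J"
    and T: "T * Q - 1 \<in> J" "Q * T - 1 \<in> J"
    using assms unfolding invertible_mod_def by blast
  have "(T * S) * (P * Q) - 1 = T * (S * P - 1) * Q + (T * Q - 1)"
    by (simp add: algebra_simps)
  moreover have "(P * Q) * (T * S) - 1 = P * (Q * T - 1) * S + (P * S - 1)"
    by (simp add: algebra_simps)
  ultimately show ?thesis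
    unfolding invertible_mod_def using S T
    by (metis ideal_add ideal_mult_left ideal_mult_right)
qed

lemma invertible_mod_factor:
  assumes "P * Q = X" and "Q * P = X" and "invertible_mod J X"
  shows "invertible_mod J P"
proof -
  obtain S where "S * X - 1 \<in> J" "X * S - 1 \<in> J"
    using assms(3) unfolding invertible_mod_def by blast
  moreover have "(S * Q) * P = S * X"
    using assms(2) by (simp add: mult.assoc)
  moreover have "P * (Q * S) = X * S"
    using assms(1) by (simp flip: mult.assoc)
  ultimately have "(S * Q) * P - 1 \<in> J" "P * (Q * S) - 1 \<in> J"
    by simp_all
  then show ?thesis by (rule invertible_modI)
qed

lemma invertible_mod_jacobson:
  assumes z: "\<And>x. z * x = x * z" and zw: "z * w = 1"
    and "invertible_mod J (z + a * b)"
  shows "invertible_mod J (z + b * a)"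
proof -
  obtain S where S: "S * (z + a * b) - 1 \<in> J" "(z + a * b) * S - 1 \<in> J"
    using assms(3) unfolding invertible_mod_def by blast
  have z_left_commute: "z * (x * y) = x * (z * y)" for x y
    by (metis z mult.assoc)
  have w: "w * x = x * w" for x
    by (metis z zw mult.assoc mult_1_left mult_1_right)
  have wz: "w * z = 1"
    using zw w by simp
  have left: "(1 - b * S * a) * (z + b * a) = z - b * (S * (z + a * b) - 1) * a"
    by (simp add: algebra_simps z_left_commute z[of a])
  have right: "(z + b * a) * (1 - b * S * a) = z - b * ((z + a * b) * S - 1) * a"
    by (simp add: algebra_simps z_left_commute)
  have
    "w * (1 - b * S * a) * (z + b * a) - 1 = - (w * (b * (S * (z + a * b) - 1) * a))"
    by (simp only: mult.assoc[of w] left) (simp add: right_diff_distrib wz)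
  moreover have
    "(z + b * a) * (w * (1 - b * S * a)) - 1 = - (b * ((z + a * b) * S - 1) * a * w)"
    by (simp only: w[of "1 - b * S * a"] mult.assoc[symmetric] right)
      (simp add: left_diff_distrib zw)
  ultimately have "w * (1 - b * S * a) * (z + b * a) - 1 \<in> J"
    and "(z + b * a) * (w * (1 - b * S * a)) - 1 \<in> J"
    using S by (simp_all add: ideal_uminus ideal_mult_left ideal_mult_right)
  then show ?thesis
    unfolding invertible_mod_def by blast
qed

lemma invertible_mod_add_commutator_imp_diff:
  assumes z: "\<And>x. z * x = x * z" and zw: "z * w = 1"
    and MM: "M * M = 0" and NN: "N * N = 0"
    and inv: "invertible_mod J (z + (M * N - N * M))"
  shows "invertible_mod J (z - (M * N - N * M))"
proof -
  let ?T = "M * N - N * M"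
  have z_left_commute: "z * (x * y) = x * (z * y)" for x y
    by (metis z mult.assoc)
  have MM': "M * (M * x) = 0" and NN': "N * (N * x) = 0" for x
    using MM NN by (metis mult.assoc mult_zero_left)+
  have "invertible_mod J z"
    using zw z[of w] by (intro invertible_mod_unit) simp_all
  then have X: "invertible_mod J (z * (z + ?T))"
    using inv by (rule invertible_mod_mult)
  have e1: "(z + M * N) * (z + (- N) * M) = z * (z + ?T)"
    by (simp add: algebra_simps z_left_commute z[of M] z[of N] NN')
  have e2: "(z + (- N) * M) * (z + M * N) = z * (z + ?T)"
    by (simp add: algebra_simps z_left_commute z[of M] z[of N] MM')
  have "invertible_mod J (z + M * (- N))"
    using invertible_mod_jacobson[OF z zw invertible_mod_factor[OF e2 e1 X]] .
  moreover have "invertible_mod J (z + N * M)"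
    using invertible_mod_jacobson[OF z zw invertible_mod_factor[OF e1 e2 X]] .
  ultimately have "invertible_mod J ((z + M * (- N)) * (z + N * M))"
    by (rule invertible_mod_mult)
  also have "(z + M * (- N)) * (z + N * M) = z * (z - ?T)"
    by (simp add: algebra_simps z_left_commute z[of M] z[of N] NN')
  finally show ?thesis
    by (rule invertible_mod_factor[OF z[symmetric] refl])
qed

end

section \<open>Bounded complex-linear and compact operators\<close>

context complex_hilbert_space
begin

lemma scaleC_zero_right [simp]: "c *\<^sub>C 0 = 0"
  using scaleC_add_right[of c 0 0] by simp

lemma scaleC_minus_right: "c *\<^sub>C (- x) = - (c *\<^sub>C x)"
  by (metis scaleC_add_right add.right_inverse scaleC_zero_right neg_eq_iff_add_eq_0)

lemma scaleC_diff_right: "c *\<^sub>C (x - y) = c *\<^sub>C x - c *\<^sub>C y"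
  using scaleC_add_right[of c x "- y"] by (simp add: scaleC_minus_right)

lemma norm_scaleC: "norm (c *\<^sub>C x) = cmod c * norm x"
proof -
  have "cinner (c *\<^sub>C x) (c *\<^sub>C x) = cnj c * cnj (cnj c * cinner x x)"
    by (metis cinner_commute cinner_scaleC_left)
  also have "\<dots> = (cnj c * c) * cinner x x"
    using cinner_commute[of x x] by (simp add: mult.assoc)
  also have "cnj c * c = complex_of_real ((cmod c)\<^sup>2)"
    by (metis complex_norm_square mult.commute)
  finally have "Re (cinner (c *\<^sub>C x) (c *\<^sub>C x)) = (cmod c)\<^sup>2 * Re (cinner x x)"
    by (simp del: of_real_power)
  then show ?thesis
    unfolding norm_cinner[of "c *\<^sub>C x"] norm_cinner[of x] by (simp add: real_sqrt_mult)
qed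

end

lemma scaleC_zero_left [simp]: "(0::complex) *\<^sub>C (x::'a::complex_hilbert_space) = 0"
  using scaleR_scaleC[of 0 x] by simp

lemma bounded_clinear_imp_bounded_linear: "bounded_clinear f \<Longrightarrow> bounded_linear f"
  unfolding bounded_clinear_def by blast

lemma bounded_clinear_scaleC_apply: "bounded_clinear f \<Longrightarrow> f (c *\<^sub>C x) = c *\<^sub>C f x"
  unfolding bounded_clinear_def by blast

lemma bounded_clinear_ident: "bounded_clinear (\<lambda>x. x)"
  unfolding bounded_clinear_def by simp

lemma bounded_clinear_zero: "bounded_clinear (\<lambda>x. 0)"
  unfolding bounded_clinear_def by simp

lemma bounded_clinear_add:
  "bounded_clinear f \<Longrightarrow> bounded_clinear g \<Longrightarrow> bounded_clinear (\<lambda>x. f x + g x)"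
  unfolding bounded_clinear_def by (auto intro: bounded_linear_add simp: scaleC_add_right)

lemma bounded_clinear_minus: "bounded_clinear f \<Longrightarrow> bounded_clinear (\<lambda>x. - f x)"
  unfolding bounded_clinear_def by (auto intro: bounded_linear_minus simp: scaleC_minus_right)

lemma bounded_clinear_diff:
  "bounded_clinear f \<Longrightarrow> bounded_clinear g \<Longrightarrow> bounded_clinear (\<lambda>x. f x - g x)"
  unfolding bounded_clinear_def by (auto intro: bounded_linear_sub simp: scaleC_diff_right)

lemma bounded_clinear_compose:
  "bounded_clinear f \<Longrightarrow> bounded_clinear g \<Longrightarrow> bounded_clinear (\<lambda>x. f (g x))"
  unfolding bounded_clinear_def by (auto intro: bounded_linear_compose[unfolded o_def])

lemma bounded_clinear_scaleC: "bounded_clinear (\<lambda>x. c *\<^sub>C x)"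
  unfolding bounded_clinear_def
proof (intro conjI allI)
  show "bounded_linear (\<lambda>x. c *\<^sub>C x)"
    by (rule bounded_linear_intro[where K = "cmod c"])
      (simp_all add: scaleC_add_right scaleR_scaleC scaleC_scaleC mult.commute norm_scaleC)
  show "c *\<^sub>C d *\<^sub>C x = d *\<^sub>C c *\<^sub>C x" for d x
    by (simp add: scaleC_scaleC mult.commute)
qed

lemma compact_op_image_bounded:
  assumes K: "compact_op K" and "bounded S"
  obtains C where "compact C" and "K ` S \<subseteq> C"
proof -
  obtain r where r: "r > 0" "S \<subseteq> ball 0 r"
    using bounded_subset_ballD[OF \<open>bounded S\<close>] by blast
  have lin: "linear K"
    using K unfolding compact_op_def
    by (simp add: bounded_clinear_imp_bounded_linear bounded_linear.linear)
  let ?C = "(\<lambda>y. r *\<^sub>R y) ` closure (K ` ball 0 1)"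
  have "K x \<in> ?C" if "x \<in> ball 0 r" for x
  proof -
    have "(1 / r) *\<^sub>R x \<in> ball 0 1"
      using that r(1) by simp
    then have "K ((1 / r) *\<^sub>R x) \<in> closure (K ` ball 0 1)"
      by (rule closure_subset[THEN subsetD, OF imageI])
    moreover have "K x = r *\<^sub>R K ((1 / r) *\<^sub>R x)"
      using r(1) by (simp add: linear_scale[OF lin])
    ultimately show ?thesis by blast
  qed
  moreover have "compact ?C"
    using K unfolding compact_op_def by (intro compact_scaling) blast
  ultimately show ?thesis
    using r(2) by (intro that[of ?C]) auto
qed

lemma compact_opI:
  assumes "bounded_clinear K" and "compact C" and "K ` ball 0 1 \<subseteq> C"
  shows "compact_op K"
proof -
  have "closure (K ` ball 0 1) \<subseteq> C"
    using assms(2,3) by (simp add: closure_minimal compact_imp_closed)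
  then have "compact (closure (K ` ball 0 1))"
    using assms(2) by (metis closed_closure compact_Int_closed inf.absorb_iff2)
  then show ?thesis
    unfolding compact_op_def using assms(1) by blast
qed

lemma compact_op_zero: "compact_op (\<lambda>x. 0)"
  by (rule compact_opI[OF bounded_clinear_zero compact_sing]) blast

lemma compact_op_add:
  assumes K: "compact_op K" and L: "compact_op L"
  shows "compact_op (\<lambda>x. K x + L x)"
proof -
  obtain C where C: "compact C" "K ` ball 0 1 \<subseteq> C"
    using compact_op_image_bounded[OF K bounded_ball] .
  obtain D where D: "compact D" "L ` ball 0 1 \<subseteq> D"
    using compact_op_image_bounded[OF L bounded_ball] .
  show ?thesis
  proof (rule compact_opI)
    show "bounded_clinear (\<lambda>x. K x + L x)"
      using K L unfolding compact_op_def by (simp add: bounded_clinear_add)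
    show "compact {x + y |x y. x \<in> C \<and> y \<in> D}"
      using C(1) D(1) by (rule compact_sums)
    show "(\<lambda>x. K x + L x) ` ball 0 1 \<subseteq> {x + y |x y. x \<in> C \<and> y \<in> D}"
      using C(2) D(2) by blast
  qed
qed

lemma compact_op_compose_left:
  assumes K: "compact_op K" and B: "bounded_clinear B"
  shows "compact_op (\<lambda>x. B (K x))"
proof -
  obtain C where C: "compact C" "K ` ball 0 1 \<subseteq> C"
    using compact_op_image_bounded[OF K bounded_ball] .
  show ?thesis
  proof (rule compact_opI)
    show "bounded_clinear (\<lambda>x. B (K x))"
      using K B unfolding compact_op_def by (simp add: bounded_clinear_compose)
    show "compact (B ` C)"
      using C(1) B by (intro compact_continuous_image linear_continuous_on
          bounded_clinear_imp_bounded_linear)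
    show "(\<lambda>x. B (K x)) ` ball 0 1 \<subseteq> B ` C"
      using C(2) by blast
  qed
qed

lemma compact_op_compose_right:
  assumes K: "compact_op K" and B: "bounded_clinear B"
  shows "compact_op (\<lambda>x. K (B x))"
proof -
  have "bounded (B ` ball 0 1)"
    using B by (simp add: bounded_clinear_imp_bounded_linear bounded_linear_image)
  then obtain C where "compact C" "K ` B ` ball 0 1 \<subseteq> C"
    using compact_op_image_bounded[OF K] by blast
  moreover have "bounded_clinear (\<lambda>x. K (B x))"
    using K B unfolding compact_op_def by (simp add: bounded_clinear_compose)
  ultimately show ?thesis
    by (intro compact_opI[where C = C]) (auto simp: image_image)
qed

section \<open>The ring of bounded operators\<close>

typedef (overloaded) ('a::complex_hilbert_space) bop = "{f::'a \<Rightarrow> 'a. bounded_clinear f}"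
  morphisms bop_apply Bop
  using bounded_clinear_ident by blast

setup_lifting type_definition_bop

lemma bounded_clinear_bop_apply: "bounded_clinear (bop_apply X)"
  using bop_apply by blast

lemma bop_apply_Bop: "bounded_clinear f \<Longrightarrow> bop_apply (Bop f) = f"
  by (simp add: Bop_inverse)

lemma bop_eqI: "(\<And>x. bop_apply X x = bop_apply Y x) \<Longrightarrow> X = Y"
  by (metis bop_apply_inject ext)

instantiation bop :: (complex_hilbert_space) "{zero, one, plus, minus, uminus, times}"
begin
lift_definition zero_bop :: "'a bop" is "\<lambda>x. 0" by (rule bounded_clinear_zero)
lift_definition one_bop :: "'a bop" is "\<lambda>x. x" by (rule bounded_clinear_ident)
lift_definition plus_bop :: "'a bop \<Rightarrow> 'a bop \<Rightarrow> 'a bop" is "\<lambda>f g x. f x + g x"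
  by (rule bounded_clinear_add)
lift_definition minus_bop :: "'a bop \<Rightarrow> 'a bop \<Rightarrow> 'a bop" is "\<lambda>f g x. f x - g x"
  by (rule bounded_clinear_diff)
lift_definition uminus_bop :: "'a bop \<Rightarrow> 'a bop" is "\<lambda>f x. - f x"
  by (rule bounded_clinear_minus)
lift_definition times_bop :: "'a bop \<Rightarrow> 'a bop \<Rightarrow> 'a bop" is "\<lambda>f g x. f (g x)"
  by (rule bounded_clinear_compose)
instance ..
end

lift_definition bop_scalar :: "complex \<Rightarrow> 'a::complex_hilbert_space bop" is "\<lambda>c x. c *\<^sub>C x"
  by (rule bounded_clinear_scaleC)

lemmas bop_apply_simps = zero_bop.rep_eq one_bop.rep_eq plus_bop.rep_eq minus_bop.rep_eq
  uminus_bop.rep_eq times_bop.rep_eq bop_scalar.rep_eq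

instance bop :: (complex_hilbert_space) ring
proof
  fix A B C :: "'a bop"
  have lin: "linear (bop_apply A)"
    using bounded_clinear_imp_bounded_linear[OF bounded_clinear_bop_apply]
    by (rule bounded_linear.linear)
  show "A * (B + C) = A * B + A * C"
    by (rule bop_eqI) (simp add: bop_apply_simps linear_add[OF lin])
qed (auto intro!: bop_eqI simp: bop_apply_simps)

instance bop :: (complex_hilbert_space) monoid_mult
  by standard (auto intro!: bop_eqI simp: bop_apply_simps)

lemma bop_scalar_zero: "bop_scalar 0 = 0"
  by (rule bop_eqI) (simp add: bop_apply_simps)

lemma bop_scalar_mult: "bop_scalar c * bop_scalar d = bop_scalar (c * d)"
  by (rule bop_eqI) (simp add: bop_apply_simps scaleC_scaleC)

lemma bop_scalar_one: "bop_scalar 1 = 1"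
  by (rule bop_eqI) (simp add: bop_apply_simps scaleC_one)

lemma bop_scalar_commute: "bop_scalar c * X = X * bop_scalar c"
  by (rule bop_eqI)
    (simp add: bop_apply_simps bounded_clinear_scaleC_apply[OF bounded_clinear_bop_apply])

lemma two_sided_ideal_compact_op:
  "two_sided_ideal {X :: 'a::complex_hilbert_space bop. compact_op (bop_apply X)}"
  unfolding two_sided_ideal_def
  by (simp add: bop_apply_simps compact_op_zero compact_op_add compact_op_compose_left
      compact_op_compose_right bounded_clinear_bop_apply)

definition spectrum_mod :: "'a::complex_hilbert_space bop set \<Rightarrow> 'a bop \<Rightarrow> complex set" where
  "spectrum_mod J X = {l. \<not> invertible_mod J (X - bop_scalar l)}"

lemma spectrum_mod_commutator_subset:
  fixes M N :: "'a::complex_hilbert_space bop"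
  assumes J: "two_sided_ideal J" and "M * M = 0" and "N * N = 0"
  shows "spectrum_mod J (M * N - N * M) \<subseteq> spectrum_mod J (- (M * N - N * M))"
proof
  fix l
  assume "l \<in> spectrum_mod J (M * N - N * M)"
  then have not_inv: "\<not> invertible_mod J (M * N - N * M - bop_scalar l)"
    unfolding spectrum_mod_def by blast
  show "l \<in> spectrum_mod J (- (M * N - N * M))"
  proof (cases "l = 0")
    case True
    have "\<not> invertible_mod J (- (M * N - N * M))"
      using not_inv True invertible_mod_uminus[of J "- (M * N - N * M)"]
      by (auto simp: bop_scalar_zero)
    then show ?thesis
      using True by (simp add: spectrum_mod_def bop_scalar_zero)
  next
    case False
    let ?z = "- bop_scalar l" and ?w = "- bop_scalar (1 / l)"
    have "?z * X = X * ?z" for X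
      by (simp add: bop_scalar_commute)
    moreover have "?z * ?w = 1"
      using False by (simp add: bop_scalar_mult bop_scalar_one)
    ultimately have
      "invertible_mod J (?z + (N * M - M * N)) \<Longrightarrow> invertible_mod J (?z - (N * M - M * N))"
      using invertible_mod_add_commutator_imp_diff[OF J] assms(2,3) by blast
    moreover have "?z + (N * M - M * N) = - (M * N - N * M) - bop_scalar l"
      and "?z - (N * M - M * N) = M * N - N * M - bop_scalar l"
      by (simp_all add: algebra_simps)
    ultimately show ?thesis
      using not_inv unfolding spectrum_mod_def by auto
  qed
qed

lemma invertible_mod_Bop_iff:
  assumes T: "bounded_clinear T"
  shows "invertible_mod {X. P (bop_apply X)} (Bop T - bop_scalar l) \<longleftrightarrow>
    (\<exists>S. bounded_clinear S \<and> P (\<lambda>x. S (T x - l *\<^sub>C x) - x) \<and> P (\<lambda>x. T (S x) - l *\<^sub>C S x - x))"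
    (is "_ \<longleftrightarrow> (\<exists>S. bounded_clinear S \<and> ?left S \<and> ?right S)")
proof -
  have left: "bop_apply (S * (Bop T - bop_scalar l) - 1) =
      (\<lambda>x. bop_apply S (T x - l *\<^sub>C x) - x)"
    and right: "bop_apply ((Bop T - bop_scalar l) * S - 1) =
      (\<lambda>x. T (bop_apply S x) - l *\<^sub>C bop_apply S x - x)"
    for S
    by (simp_all add: fun_eq_iff bop_apply_simps bop_apply_Bop[OF T])
  show ?thesis
  proof
    assume "invertible_mod {X. P (bop_apply X)} (Bop T - bop_scalar l)"
    then obtain S where "?left (bop_apply S)" and "?right (bop_apply S)"
      unfolding invertible_mod_def mem_Collect_eq left right by blast
    then show "\<exists>S. bounded_clinear S \<and> ?left S \<and> ?right S"
      using bounded_clinear_bop_apply by blast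
  next
    assume "\<exists>S. bounded_clinear S \<and> ?left S \<and> ?right S"
    then obtain S where S: "bounded_clinear S" "?left S" "?right S"
      by blast
    then have "?left (bop_apply (Bop S))" and "?right (bop_apply (Bop S))"
      by (simp_all add: bop_apply_Bop)
    then show "invertible_mod {X. P (bop_apply X)} (Bop T - bop_scalar l)"
      unfolding invertible_mod_def mem_Collect_eq left right by blast
  qed
qed

lemma op_spectrum_eq_spectrum_mod:
  assumes T: "bounded_clinear T"
  shows "op_spectrum T = spectrum_mod {0} (Bop T)"
proof -
  have zero: "{0} = {X. bop_apply X = (\<lambda>x. 0)}"
    by (auto simp flip: zero_bop.rep_eq simp: bop_apply_inject)
  show ?thesis
    unfolding op_spectrum_def spectrum_mod_def zero
      invertible_mod_Bop_iff[OF T, of "\<lambda>f. f = (\<lambda>x. 0)"]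
    by (simp add: fun_eq_iff)
qed

lemma ess_spectrum_eq_spectrum_mod:
  "bounded_clinear T \<Longrightarrow> ess_spectrum T = spectrum_mod {X. compact_op (bop_apply X)} (Bop T)"
  unfolding ess_spectrum_def spectrum_mod_def by (simp add: invertible_mod_Bop_iff)

theorem proposition2p12:
  fixes M N :: "'a::complex_hilbert_space \<Rightarrow> 'a"
  assumes "separable_space TYPE('a)"
    and "bounded_clinear M" and "bounded_clinear N"
    and "\<And>x. M (M x) = 0" and "\<And>x. N (N x) = 0"
  defines "T \<equiv> (\<lambda>x. M (N x) - N (M x))"
  shows "(\<forall>z\<in>op_spectrum T.
            connected_component_set (op_spectrum T) z \<inter> op_spectrum (\<lambda>x. - T x) \<noteq> {})
       \<and> (\<forall>z\<in>ess_spectrum T.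
            connected_component_set (ess_spectrum T) z \<inter> ess_spectrum (\<lambda>x. - T x) \<noteq> {})"
proof -
  have M: "bop_apply (Bop M) = M" and N: "bop_apply (Bop N) = N"
    using assms(2,3) by (simp_all add: bop_apply_Bop)
  have T: "bounded_clinear T" and minus_T: "bounded_clinear (\<lambda>x. - T x)"
    unfolding T_def using assms(2,3)
    by (simp_all add: bounded_clinear_diff bounded_clinear_minus bounded_clinear_compose)
  have MM: "Bop M * Bop M = 0" and NN: "Bop N * Bop N = 0"
    using assms(4,5) by (auto intro!: bop_eqI simp: bop_apply_simps M N)
  have "Bop T = Bop M * Bop N - Bop N * Bop M"
    and "Bop (\<lambda>x. - T x) = - (Bop M * Bop N - Bop N * Bop M)"
    by (auto intro!: bop_eqI simp: bop_apply_simps M N bop_apply_Bop[OF T]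
        bop_apply_Bop[OF minus_T]) (simp_all add: T_def)
  then have spectrum_mod_subset: "spectrum_mod J (Bop T) \<subseteq> spectrum_mod J (Bop (\<lambda>x. - T x))"
    if "two_sided_ideal J" for J
    using spectrum_mod_commutator_subset[OF that MM NN] by simp
  have "op_spectrum T \<subseteq> op_spectrum (\<lambda>x. - T x)"
    unfolding op_spectrum_eq_spectrum_mod[OF T] op_spectrum_eq_spectrum_mod[OF minus_T]
    by (rule spectrum_mod_subset[OF two_sided_ideal_zero])
  moreover have "ess_spectrum T \<subseteq> ess_spectrum (\<lambda>x. - T x)"
    unfolding ess_spectrum_eq_spectrum_mod[OF T] ess_spectrum_eq_spectrum_mod[OF minus_T]
    by (rule spectrum_mod_subset[OF two_sided_ideal_compact_op])
  ultimately show ?thesis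
    by (auto dest: connected_component_refl)
qed

end
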